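(* For every function $g:(0,\tfrac12)\to\mathbb N$ there is a (possibly infinite) family of graphs $\mathcal F$ with $C_4\in\mathcal F$ and a sequence $(\varepsilon_k)_{k\ge1}$ of positive reals with $\varepsilon_k\to0$, such that for every $k\ge1$ there is $n_0(k)$ so that for every $n\ge n_0(k)$ there is an $n$-vertex graph $G$ which is $\varepsilon_k$-far from being induced $\mathcal F$-free, and yet every induced subgraph of $G$ on $g(\varepsilon_k)$ vertices is induced $\mathcal F$-free.
   Context: A graph is induced $\mathcal F$-free if it contains no induced subgraph isomorphic to any $F\in\mathcal F$. An $n$-vertex graph $G$ is $\varepsilon$-far from satisfying a property $\mathcal P$ if one must add and/or delete at least $\varepsilon n^2$ edges of $G$ in order to obtain a graph satisfying $\mathcal P$. *)

theory Defs
  imports Complex_Main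
begin

text \<open>A finite simple graph: a vertex set and a set of edges, each edge a
2-element subset of the vertex set.\<close>
type_synonym graph = "nat set \<times> nat set set"

definition verts :: "graph \<Rightarrow> nat set" where "verts G = fst G"
definition edges :: "graph \<Rightarrow> nat set set" where "edges G = snd G"

definition wf_graph :: "graph \<Rightarrow> bool" where
  "wf_graph G \<longleftrightarrow> finite (verts G) \<and>
     (\<forall>e\<in>edges G. e \<subseteq> verts G \<and> card e = 2)"

definition induced_sub :: "graph \<Rightarrow> nat set \<Rightarrow> graph" where
  "induced_sub G S = (S, {e\<in>edges G. e \<subseteq> S})"

definition graph_iso :: "graph \<Rightarrow> graph \<Rightarrow> bool" where
  "graph_iso H G \<longleftrightarrow> (\<exists>f. bij_betw f (verts H) (verts G) \<and>
     (\<forall>x\<in>verts H. \<forall>y\<in>verts H. {x, y} \<in> edges H \<longleftrightarrow> {f x, f y} \<in> edges G))"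

definition contains_induced :: "graph \<Rightarrow> graph \<Rightarrow> bool" where
  "contains_induced G H \<longleftrightarrow> (\<exists>S\<subseteq>verts G. graph_iso H (induced_sub G S))"

definition induced_free :: "graph set \<Rightarrow> graph \<Rightarrow> bool" where
  "induced_free \<F> G \<longleftrightarrow> (\<forall>H\<in>\<F>. \<not> contains_induced G H)"

definition far_from_free :: "real \<Rightarrow> graph set \<Rightarrow> graph \<Rightarrow> bool" where
  "far_from_free \<epsilon> \<F> G \<longleftrightarrow>
     (\<forall>E'. wf_graph (verts G, E') \<and> induced_free \<F> (verts G, E') \<longrightarrow>
        real (card (edges G - E' \<union> (E' - edges G))) \<ge> \<epsilon> * real (card (verts G))^2)"

definition C4 :: graph where
  "C4 = ({0,1,2,3}, {{0,1},{1,2},{2,3},{3,0}})"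

end

theory Submission
  imports Defs "HOL-Library.FuncSet"
begin

text \<open>Let \<open>G\<close> be the blow-up of the cycle \<open>C\<^sub>L\<close>, \<open>L = k + 5\<close>, on \<open>n\<close> vertices: its
  classes are cliques of size about \<open>n/L\<close> and consecutive classes are completely joined.
  A graph differing from \<open>G\<close> in fewer than \<open>n\<^sup>2/(4L\<^sup>2)\<close> pairs agrees with \<open>G\<close> on some
  transversal of the classes (a counting argument), and such a transversal spans an induced
  \<open>C\<^sub>L\<close>. So if \<open>\<F>\<close> contains every graph on \<open>m\<^sub>k > g(\<epsilon>\<^sub>k)\<close> vertices with an induced
  \<open>C\<^sub>L\<close>, then \<open>G\<close> is \<open>1/(4L\<^sup>2)\<close>-far from \<open>\<F>\<close>-free. On the other hand a blow-up of
  \<open>C\<^sub>L\<close> contains no induced \<open>C\<^sub>L\<^sub>'\<close> with \<open>4 \<le> L' \<noteq> L\<close>, so an induced subgraph on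
  \<open>g(\<epsilon>\<^sub>k) < m\<^sub>k\<close> vertices contains no member of \<open>\<F>\<close>.\<close>

lemma verts_Pair [simp]: "verts (V, E) = V"
  by (simp add: verts_def)

lemma edges_Pair [simp]: "edges (V, E) = E"
  by (simp add: edges_def)

lemma verts_induced_sub [simp]: "verts (induced_sub G S) = S"
  by (simp add: induced_sub_def)

lemma edges_induced_sub [simp]: "edges (induced_sub G S) = {e \<in> edges G. e \<subseteq> S}"
  by (simp add: induced_sub_def)

lemma induced_sub_induced_sub:
  "T \<subseteq> S \<Longrightarrow> induced_sub (induced_sub G S) T = induced_sub G T"
  unfolding induced_sub_def by auto

lemma wf_graph_edges_finite: "wf_graph G \<Longrightarrow> finite (edges G)"
  unfolding wf_graph_def by (meson Pow_iff finite_Pow_iff finite_subset subsetI)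

lemma wf_graph_induced_sub: "wf_graph G \<Longrightarrow> S \<subseteq> verts G \<Longrightarrow> wf_graph (induced_sub G S)"
  unfolding wf_graph_def by (auto intro: finite_subset)

lemma graph_iso_refl: "graph_iso H H"
  unfolding graph_iso_def by (rule exI[of _ id]) auto

lemma contains_induced_induced_sub: "S \<subseteq> verts G \<Longrightarrow> contains_induced G (induced_sub G S)"
  unfolding contains_induced_def using graph_iso_refl by blast

lemma contains_induced_trans:
  assumes "contains_induced G H" "contains_induced H K"
  shows "contains_induced G K"
proof -
  obtain S f where S: "S \<subseteq> verts G" and bf: "bij_betw f (verts H) S"
    and ef: "\<forall>x\<in>verts H. \<forall>y\<in>verts H. {x,y} \<in> edges H \<longleftrightarrow> {f x, f y} \<in> edges (induced_sub G S)"
    using assms(1) unfolding contains_induced_def graph_iso_def by auto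
  obtain T h where T: "T \<subseteq> verts H" and bh: "bij_betw h (verts K) T"
    and eh: "\<forall>x\<in>verts K. \<forall>y\<in>verts K. {x,y} \<in> edges K \<longleftrightarrow> {h x, h y} \<in> edges (induced_sub H T)"
    using assms(2) unfolding contains_induced_def graph_iso_def by auto
  have "bij_betw f T (f ` T)" using bf T by (meson bij_betw_subset)
  with bh have bc: "bij_betw (f \<circ> h) (verts K) (f ` T)" by (rule bij_betw_trans)
  have hT: "x \<in> verts K \<Longrightarrow> h x \<in> T" for x using bh by (auto simp: bij_betw_def)
  have fS: "x \<in> verts H \<Longrightarrow> f x \<in> S" for x using bf by (auto simp: bij_betw_def)
  have "{x,y} \<in> edges K \<longleftrightarrow> {(f\<circ>h) x, (f\<circ>h) y} \<in> edges (induced_sub G (f ` T))"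
    if x: "x \<in> verts K" and y: "y \<in> verts K" for x y
  proof -
    have "{x,y} \<in> edges K \<longleftrightarrow> {h x, h y} \<in> edges H" using eh x y hT by auto
    also have "\<dots> \<longleftrightarrow> {f (h x), f (h y)} \<in> edges G" using ef x y hT T fS by auto
    also have "\<dots> \<longleftrightarrow> {(f\<circ>h) x, (f\<circ>h) y} \<in> edges (induced_sub G (f ` T))" using x y hT by auto
    finally show ?thesis .
  qed
  then have "graph_iso K (induced_sub G (f ` T))"
    unfolding graph_iso_def using bc by auto
  moreover have "f ` T \<subseteq> verts G" using T fS S by auto
  ultimately show ?thesis
    unfolding contains_induced_def by blast
qed

lemma contains_induced_card_le:
  assumes "contains_induced G H" "finite (verts G)"
  shows "card (verts H) \<le> card (verts G)"
proof -
  obtain S where S: "S \<subseteq> verts G" and "graph_iso H (induced_sub G S)"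
    using assms(1) unfolding contains_induced_def by blast
  then obtain f where "bij_betw f (verts H) S"
    unfolding graph_iso_def by auto
  then have "card (verts H) = card S" by (rule bij_betw_same_card)
  also have "\<dots> \<le> card (verts G)" by (rule card_mono[OF assms(2) S])
  finally show ?thesis .
qed

lemma exists_subset_card_between:
  assumes "finite A" "B \<subseteq> A" "card B \<le> k" "k \<le> card A"
  obtains S where "B \<subseteq> S" "S \<subseteq> A" "card S = k"
proof -
  have "k - card B \<le> card (A - B)"
    using assms by (simp add: card_Diff_subset finite_subset)
  then obtain C where C: "C \<subseteq> A - B" "card C = k - card B"
    by (meson obtain_subset_with_card_n)
  have "finite B" "finite C" using assms C finite_subset by (blast, blast)
  then have "card (B \<union> C) = k" using C assms(3) by (subst card_Un_disjoint) auto
  then show ?thesis using C assms(2) that[of "B \<union> C"] by auto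
qed

lemma contains_induced_in_induced_sub_of_card:
  assumes "finite (verts G)" "contains_induced G H" "card (verts H) \<le> m" "m \<le> card (verts G)"
  obtains S where "S \<subseteq> verts G" "card S = m" "contains_induced (induced_sub G S) H"
proof -
  obtain T where T: "T \<subseteq> verts G" and iso: "graph_iso H (induced_sub G T)"
    using assms(2) unfolding contains_induced_def by auto
  have "card T = card (verts H)"
    using iso unfolding graph_iso_def by (auto dest: bij_betw_same_card)
  then obtain S where S: "T \<subseteq> S" "S \<subseteq> verts G" "card S = m"
    using exists_subset_card_between[OF assms(1) T] assms(3,4) by metis
  have "contains_induced (induced_sub G S) H"
    unfolding contains_induced_def using S(1) iso
    by (intro exI[of _ T]) (simp add: induced_sub_induced_sub)
  then show ?thesis using S that by blast
qed

definition cyc_succ :: "nat \<Rightarrow> nat \<Rightarrow> nat" where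
  "cyc_succ L i = (if Suc i = L then 0 else Suc i)"

definition cyc_pred :: "nat \<Rightarrow> nat \<Rightarrow> nat" where
  "cyc_pred L i = (if i = 0 then L - 1 else i - 1)"

definition cyc_adj :: "nat \<Rightarrow> nat \<Rightarrow> nat \<Rightarrow> bool" where
  "cyc_adj L x y \<longleftrightarrow> y = cyc_succ L x \<or> x = cyc_succ L y"

definition cycle :: "nat \<Rightarrow> graph" where
  "cycle L = ({..<L}, {{i, cyc_succ L i} | i. i < L})"

lemma cyc_succ_less: "i < L \<Longrightarrow> cyc_succ L i < L"
  by (auto simp: cyc_succ_def)

lemma cyc_pred_less: "i < L \<Longrightarrow> cyc_pred L i < L"
  by (auto simp: cyc_pred_def)

lemma cyc_succ_neq: "L \<ge> 2 \<Longrightarrow> i < L \<Longrightarrow> cyc_succ L i \<noteq> i"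
  by (auto simp: cyc_succ_def)

lemma cyc_succ_pred: "x < L \<Longrightarrow> cyc_succ L (cyc_pred L x) = x"
  by (auto simp: cyc_succ_def cyc_pred_def)

lemma cyc_succ_mod: "L > 0 \<Longrightarrow> cyc_succ L (c mod L) = Suc c mod L"
  unfolding cyc_succ_def by (simp add: mod_Suc)

lemma cyc_pred_neq_succ_succ: "L \<ge> 4 \<Longrightarrow> x < L \<Longrightarrow> cyc_pred L x \<noteq> cyc_succ L (cyc_succ L x)"
  unfolding cyc_pred_def cyc_succ_def
  by (cases "x = 0"; cases "Suc x = L"; cases "Suc (Suc x) = L"; simp)

lemma cyc_adj_irrefl: "L \<ge> 2 \<Longrightarrow> x < L \<Longrightarrow> \<not> cyc_adj L x x"
  by (auto simp: cyc_adj_def cyc_succ_def)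

lemma cyc_adj_cases: "a < L \<Longrightarrow> b < L \<Longrightarrow> cyc_adj L a b \<Longrightarrow> b = cyc_succ L a \<or> b = cyc_pred L a"
  unfolding cyc_adj_def cyc_succ_def cyc_pred_def by (auto split: if_splits)

lemma edge_cycle_iff: "x < L \<Longrightarrow> y < L \<Longrightarrow> {x,y} \<in> edges (cycle L) \<longleftrightarrow> cyc_adj L x y"
  unfolding cycle_def cyc_adj_def by (auto simp: doubleton_eq_iff)

lemma wf_graph_cycle: "L \<ge> 2 \<Longrightarrow> wf_graph (cycle L)"
  unfolding wf_graph_def cycle_def using cyc_succ_less cyc_succ_neq by fastforce

lemma C4_eq_cycle: "C4 = cycle 4"
proof -
  have "{{i, cyc_succ 4 i} | i. i < (4::nat)} = {{0,1},{1,2},{2,3},{3,0}}"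
    by (auto simp: cyc_succ_def less_Suc_eq numeral_eq_Suc)
  moreover have "{..<(4::nat)} = {0,1,2,3}" by auto
  ultimately show ?thesis
    unfolding C4_def cycle_def by (simp only:)
qed

lemma cyc_succ_closed_eq:
  assumes Q: "Q \<subseteq> {..<L}" and a: "a \<in> Q" and closed: "\<forall>b\<in>Q. cyc_succ L b \<in> Q"
  shows "Q = {..<L}"
proof -
  have L0: "L > 0" and aL: "a < L" using Q a by auto
  have iter: "(a + k) mod L \<in> Q" for k
  proof (induction k)
    case 0 then show ?case using a aL by simp
  next
    case (Suc k)
    then show ?case using closed cyc_succ_mod[OF L0, of "a + k"] by fastforce
  qed
  have "i \<in> Q" if "i < L" for i
    using iter[of "L - a + i"] aL that by simp
  then show ?thesis using Q by auto
qed

subsection \<open>Blow-ups of cycles\<close>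

definition blowup_adj :: "nat \<Rightarrow> nat \<Rightarrow> nat \<Rightarrow> bool" where
  "blowup_adj L u v \<longleftrightarrow> u mod L = v mod L \<or> cyc_adj L (u mod L) (v mod L)"

definition cycle_blowup :: "nat \<Rightarrow> nat \<Rightarrow> graph" where
  "cycle_blowup n L = ({..<n}, {{u,v} | u v. u < n \<and> v < n \<and> u \<noteq> v \<and> blowup_adj L u v})"

lemma verts_cycle_blowup [simp]: "verts (cycle_blowup n L) = {..<n}"
  by (simp add: cycle_blowup_def)

lemma blowup_adj_sym: "blowup_adj L u v = blowup_adj L v u"
  unfolding blowup_adj_def cyc_adj_def by auto

lemma edge_cycle_blowup_iff:
  "{u,v} \<in> edges (cycle_blowup n L) \<longleftrightarrow> u < n \<and> v < n \<and> u \<noteq> v \<and> blowup_adj L u v"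
  unfolding cycle_blowup_def using blowup_adj_sym by (auto simp: doubleton_eq_iff)

lemma wf_graph_cycle_blowup: "wf_graph (cycle_blowup n L)"
  unfolding wf_graph_def cycle_blowup_def by auto

text \<open>A map \<open>p\<close> from the vertices of \<open>C\<^sub>L\<^sub>'\<close> to the classes of the blow-up of \<open>C\<^sub>L\<close> that is
  compatible with adjacency, as induced by an embedding of \<open>C\<^sub>L\<^sub>'\<close> into the blow-up.\<close>
context
  fixes L L' :: nat and p :: "nat \<Rightarrow> nat"
  assumes L': "L' \<ge> 4"
    and p_less: "\<And>x. x < L' \<Longrightarrow> p x < L"
    and adj: "\<And>x y. x < L' \<Longrightarrow> y < L' \<Longrightarrow> x \<noteq> y \<Longrightarrow>
                cyc_adj L' x y \<longleftrightarrow> p x = p y \<or> cyc_adj L (p x) (p y)"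
begin

text \<open>If \<open>x\<close> and its successor shared a class, the predecessor of \<open>x\<close> would be adjacent
  to that successor too, a chord of \<open>C\<^sub>L\<^sub>'\<close> since \<open>L' \<ge> 4\<close>.\<close>
lemma cycle_pattern_succ_distinct:
  assumes x: "x < L'" shows "p (cyc_succ L' x) \<noteq> p x"
proof
  assume same: "p (cyc_succ L' x) = p x"
  define y where "y = cyc_succ L' x"
  define z where "z = cyc_pred L' x"
  have yz: "y < L'" "z < L'" using x cyc_succ_less cyc_pred_less y_def z_def by auto
  have xz: "x = cyc_succ L' z" using cyc_succ_pred x y_def z_def by simp
  have ne: "z \<noteq> x" "z \<noteq> y" "x \<noteq> y" using x L' y_def z_def by (auto simp: cyc_pred_def cyc_succ_def)
  have "cyc_adj L' z x" using xz cyc_adj_def by simp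
  then have "p z = p x \<or> cyc_adj L (p z) (p x)" using adj yz x ne by blast
  then have "cyc_adj L' z y" using adj yz ne same y_def z_def by simp
  then have "y = cyc_succ L' z \<or> z = cyc_succ L' y" by (simp add: cyc_adj_def)
  moreover have "y \<noteq> cyc_succ L' z" using xz ne(3) by simp
  moreover have "z \<noteq> cyc_succ L' y"
    using cyc_pred_neq_succ_succ[OF L' x] unfolding y_def z_def .
  ultimately show False by blast
qed

lemma cycle_pattern_inj: "inj_on p {..<L'}"
proof (rule inj_onI, rule ccontr)
  fix x y assume x: "x \<in> {..<L'}" and y: "y \<in> {..<L'}" and pe: "p x = p y" and ne: "x \<noteq> y"
  then have "y = cyc_succ L' x \<or> x = cyc_succ L' y" using adj unfolding cyc_adj_def by auto
  then show False using cycle_pattern_succ_distinct x y pe by (metis lessThan_iff)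
qed

text \<open>The two neighbours of \<open>x\<close> lie in the two classes adjacent to that of \<open>x\<close>.\<close>
lemma cycle_pattern_succ_closed:
  assumes x: "x < L'" shows "cyc_succ L (p x) \<in> p ` {..<L'}"
proof -
  define y1 where "y1 = cyc_succ L' x"
  define y2 where "y2 = cyc_pred L' x"
  have y: "y1 < L'" "y2 < L'" using x cyc_succ_less cyc_pred_less y1_def y2_def by auto
  have ne: "y1 \<noteq> x" "y2 \<noteq> x" "y1 \<noteq> y2"
    using x L' y1_def y2_def by (auto simp: cyc_succ_def cyc_pred_def)
  have pne: "p x \<noteq> p y1" "p x \<noteq> p y2" "p y1 \<noteq> p y2"
    using cycle_pattern_inj x y ne by (auto simp: inj_on_def)
  have "cyc_adj L' x y1" "cyc_adj L' x y2"
    using y1_def y2_def cyc_succ_pred x by (auto simp: cyc_adj_def)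
  then have "cyc_adj L (p x) (p y1)" "cyc_adj L (p x) (p y2)"
    using adj x y ne pne by auto
  then have "p y1 = cyc_succ L (p x) \<or> p y2 = cyc_succ L (p x)"
    using cyc_adj_cases p_less x y pne(3) by metis
  then show ?thesis using y by (metis image_eqI lessThan_iff)
qed

lemma cycle_pattern_length: "L' = L"
proof -
  have "p ` {..<L'} = {..<L}"
    using cyc_succ_closed_eq[of "p ` {..<L'}" L "p 0"] p_less L' cycle_pattern_succ_closed
    by fastforce
  then show ?thesis using card_image[OF cycle_pattern_inj] by simp
qed

end

lemma cycle_blowup_induced_cycle_length:
  assumes ci: "contains_induced (cycle_blowup n L) (cycle L')" and "L > 0" "L' \<ge> 4"
  shows "L' = L"
proof -
  obtain S f where S: "S \<subseteq> {..<n}" and bf: "bij_betw f {..<L'} S"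
    and ef: "\<forall>x\<in>{..<L'}. \<forall>y\<in>{..<L'}.
               {x,y} \<in> edges (cycle L') \<longleftrightarrow> {f x, f y} \<in> edges (induced_sub (cycle_blowup n L) S)"
    using ci unfolding contains_induced_def graph_iso_def by (auto simp: cycle_def)
  have fS: "x < L' \<Longrightarrow> f x \<in> S" for x using bf by (auto simp: bij_betw_def)
  have fn: "x < L' \<Longrightarrow> f x < n" for x using fS S by auto
  have finj: "x < L' \<Longrightarrow> y < L' \<Longrightarrow> x \<noteq> y \<Longrightarrow> f x \<noteq> f y" for x y
    using bf by (auto simp: bij_betw_def inj_on_def)
  have "cyc_adj L' x y \<longleftrightarrow> f x mod L = f y mod L \<or> cyc_adj L (f x mod L) (f y mod L)"
    if "x < L'" "y < L'" "x \<noteq> y" for x y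
  proof -
    have "cyc_adj L' x y \<longleftrightarrow> {f x, f y} \<in> edges (induced_sub (cycle_blowup n L) S)"
      using edge_cycle_iff ef that by simp
    also have "\<dots> \<longleftrightarrow> blowup_adj L (f x) (f y)"
      using edge_cycle_blowup_iff fS fn finj that by auto
    finally show ?thesis unfolding blowup_adj_def .
  qed
  then show ?thesis
    using cycle_pattern_length[of L' "\<lambda>x. f x mod L" L] assms(2,3) by simp
qed

subsection \<open>Transversals of the blow-up\<close>

text \<open>Class \<open>i\<close> of the blow-up on \<open>{..<n}\<close> contains the vertices \<open>i + L * c\<close>; a function
  \<open>a \<in> PiE {..<L} (\<lambda>_. {..<s})\<close> picks the vertex \<open>i + L * a i\<close> from every class.\<close>

lemma add_mult_eq_add_mult_imp_eq:
  assumes "(i::nat) < L" "i' < L" "i + L * c = i' + L * c'"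
  shows "i = i' \<and> c = c'"
proof -
  have "i = i'"
    using arg_cong[OF assms(3), of "\<lambda>u. u mod L"] assms(1,2) by simp
  then show ?thesis using assms by simp
qed

lemma card_PiE_fix_two_le:
  assumes "finite I" "finite A" "i \<in> I" "j \<in> I" "i \<noteq> j"
  shows "card {a \<in> PiE I (\<lambda>_. A). a i = c \<and> a j = d} \<le> card A ^ (card I - 2)"
proof -
  define B where "B k = (if k = i then {c} else if k = j then {d} else A)" for k
  have "card {a \<in> PiE I (\<lambda>_. A). a i = c \<and> a j = d} \<le> card (PiE I B)"
    by (rule card_mono) (auto simp: B_def PiE_iff extensional_def finite_PiE assms(1,2))
  also have "\<dots> = (\<Prod>k\<in>I - {i,j}. card (B k)) * (\<Prod>k\<in>{i,j}. card (B k))"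
    using assms by (simp add: card_PiE prod.subset_diff[of "{i,j}" I])
  also have "\<dots> = card A ^ (card I - 2)"
    using assms by (simp add: B_def card_Diff_subset numeral_2_eq_2)
  finally show ?thesis .
qed

lemma card_transversals_hitting_le:
  "card {a \<in> PiE {..<L} (\<lambda>_. {..<s}). \<exists>i<L. \<exists>j<L. i \<noteq> j \<and> {i + L * a i, j + L * a j} = d}
     \<le> s ^ (L - 2)" (is "card ?K \<le> _")
proof (cases "?K = {}")
  case False
  then obtain a0 i0 j0 where i0j0: "i0 < L" "j0 < L" "i0 \<noteq> j0"
    and d: "d = {i0 + L * a0 i0, j0 + L * a0 j0}" by blast
  have "?K \<subseteq> {a \<in> PiE {..<L} (\<lambda>_. {..<s}). a i0 = a0 i0 \<and> a j0 = a0 j0}"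
  proof
    fix a assume "a \<in> ?K"
    then obtain i j where a: "a \<in> PiE {..<L} (\<lambda>_. {..<s})" and ij: "i < L" "j < L"
      and "{i + L * a i, j + L * a j} = d" by blast
    then have "(i + L * a i = i0 + L * a0 i0 \<and> j + L * a j = j0 + L * a0 j0) \<or>
               (i + L * a i = j0 + L * a0 j0 \<and> j + L * a j = i0 + L * a0 i0)"
      using d by (simp add: doubleton_eq_iff)
    then have "(i = i0 \<and> a i = a0 i0 \<and> j = j0 \<and> a j = a0 j0) \<or>
               (i = j0 \<and> a i = a0 j0 \<and> j = i0 \<and> a j = a0 i0)"
      using add_mult_eq_add_mult_imp_eq ij i0j0 by meson
    then show "a \<in> {a \<in> PiE {..<L} (\<lambda>_. {..<s}). a i0 = a0 i0 \<and> a j0 = a0 j0}"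
      using a by auto
  qed
  then have "card ?K \<le> card {a \<in> PiE {..<L} (\<lambda>_. {..<s}). a i0 = a0 i0 \<and> a j0 = a0 j0}"
    by (intro card_mono) (auto simp: finite_PiE)
  also have "\<dots> \<le> s ^ (L - 2)"
    using card_PiE_fix_two_le[of "{..<L}" "{..<s}" i0 j0] i0j0 by simp
  finally show ?thesis .
qed (metis card.empty zero_le)

text \<open>Each pair \<open>d\<close> is hit by at most \<open>s\<^sup>L\<^sup>-\<^sup>2\<close> of the \<open>s\<^sup>L\<close> transversals.\<close>
lemma exists_transversal_avoiding:
  fixes D :: "nat set set"
  assumes fin: "finite D" and card_D: "card D < s^2" and L: "L \<ge> 2"
  obtains a where "a \<in> PiE {..<L} (\<lambda>_. {..<s})"
    and "\<And>i j. i < L \<Longrightarrow> j < L \<Longrightarrow> i \<noteq> j \<Longrightarrow> {i + L * a i, j + L * a j} \<notin> D"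
proof -
  define T where "T = PiE {..<L} (\<lambda>_. {..<s})"
  define K where "K d = {a\<in>T. \<exists>i<L. \<exists>j<L. i \<noteq> j \<and> {i + L * a i, j + L * a j} = d}" for d
  have "card (\<Union>d\<in>D. K d) \<le> (\<Sum>d\<in>D. card (K d))" using fin by (rule card_UN_le)
  also have "\<dots> \<le> card D * s^(L-2)"
    using sum_bounded_above[of D "\<lambda>d. card (K d)" "s^(L-2)"] card_transversals_hitting_le
    unfolding K_def T_def by simp
  also have "\<dots> < s^2 * s^(L-2)"
    using card_D by (cases s) auto
  also have "\<dots> = s^L"
    using L by (metis le_add_diff_inverse power_add)
  also have "\<dots> = card T"
    by (simp add: T_def card_PiE)
  finally have card_lt: "card (\<Union>d\<in>D. K d) < card T" .
  have "(\<Union>d\<in>D. K d) \<subseteq> T" by (auto simp: K_def)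
  then have "\<not> T \<subseteq> (\<Union>d\<in>D. K d)"
    using card_lt by (metis less_irrefl subset_antisym)
  then obtain a where aT: "a \<in> T" and aK: "a \<notin> (\<Union>d\<in>D. K d)" by blast
  show ?thesis
  proof (rule that)
    show "a \<in> PiE {..<L} (\<lambda>_. {..<s})" using aT by (simp add: T_def)
    fix i j assume "i < L" "j < L" "i \<noteq> j"
    then have "a \<in> K {i + L * a i, j + L * a j}" using aT by (auto simp: K_def)
    then show "{i + L * a i, j + L * a j} \<notin> D" using aK by blast
  qed
qed

lemma transversal_induces_cycle:
  assumes L: "L \<ge> 2" and wf: "wf_graph ({..<n}, E)" and sn: "L * s \<le> n"
    and a: "a \<in> PiE {..<L} (\<lambda>_. {..<s})"
    and agree: "\<And>i j. i < L \<Longrightarrow> j < L \<Longrightarrow> i \<noteq> j \<Longrightarrow>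
                  {i + L * a i, j + L * a j} \<in> E \<longleftrightarrow> {i + L * a i, j + L * a j} \<in> edges (cycle_blowup n L)"
  shows "contains_induced ({..<n}, E) (cycle L)"
proof -
  define t where "t i = i + L * a i" for i
  have t_mod: "i < L \<Longrightarrow> t i mod L = i" for i by (simp add: t_def)
  have t_less: "t i < n" if i: "i < L" for i
  proof -
    have "t i < L * (a i + 1)" using i by (simp add: t_def)
    also have "\<dots> \<le> L * s" using a i by (intro mult_le_mono2) (auto simp: PiE_iff Suc_le_eq)
    finally show ?thesis using sn by simp
  qed
  have t_inj: "inj_on t {..<L}"
    by (rule inj_onI) (metis t_mod lessThan_iff)
  have "{x,y} \<in> edges (cycle L) \<longleftrightarrow> {t x, t y} \<in> E" if x: "x < L" and y: "y < L" for x y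
  proof (cases "x = y")
    case True
    then show ?thesis
      using wf cyc_adj_irrefl[OF L x] edge_cycle_iff[OF x x] unfolding wf_graph_def by auto
  next
    case False
    have "t x \<noteq> t y" using t_inj x y False by (auto simp: inj_on_def)
    then have "{t x, t y} \<in> E \<longleftrightarrow> blowup_adj L (t x) (t y)"
      using agree[OF x y False] t_less x y by (simp add: t_def edge_cycle_blowup_iff)
    also have "\<dots> \<longleftrightarrow> {x,y} \<in> edges (cycle L)"
      unfolding blowup_adj_def using t_mod x y False edge_cycle_iff by simp
    finally show ?thesis by simp
  qed
  then have "graph_iso (cycle L) (induced_sub ({..<n}, E) (t ` {..<L}))"
    unfolding graph_iso_def using t_inj
    by (intro exI[of _ t]) (auto simp: cycle_def bij_betw_def)
  moreover have "t ` {..<L} \<subseteq> {..<n}" using t_less by auto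
  ultimately show ?thesis unfolding contains_induced_def by auto
qed

subsection \<open>Distance from freeness\<close>

lemma square_div_four_square_le:
  assumes "0 < L" "L \<le> n"
  shows "real n ^ 2 / (4 * real L ^ 2) \<le> real (n div L) ^ 2"
proof -
  define s where "s = n div L"
  have "n < s * L + L" using assms(1) unfolding s_def
    by (metis add_less_cancel_left div_mult_mod_eq mod_less_divisor)
  moreover have "s \<ge> 1" using assms unfolding s_def by (simp add: Suc_le_eq div_greater_zero_iff)
  then have "L \<le> s * L" by simp
  ultimately have "n \<le> 2 * (s * L)" by linarith
  then have "real n \<le> 2 * (real s * real L)" by (metis of_nat_le_iff of_nat_mult of_nat_numeral)
  then have "real n ^ 2 \<le> (2 * (real s * real L)) ^ 2" by (rule power_mono) simp
  then show ?thesis using assms(1)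
    by (simp add: s_def field_simps power2_eq_square)
qed

lemma cycle_blowup_far_from_free:
  assumes L: "L \<ge> 2" "L \<le> m" "m \<le> n"
    and F: "\<And>H. wf_graph H \<Longrightarrow> card (verts H) = m \<Longrightarrow> contains_induced H (cycle L) \<Longrightarrow> H \<in> F"
  shows "far_from_free (1 / (4 * real L ^ 2)) F (cycle_blowup n L)"
  unfolding far_from_free_def
proof (intro allI impI)
  fix E assume "wf_graph (verts (cycle_blowup n L), E) \<and> induced_free F (verts (cycle_blowup n L), E)"
  then have wf: "wf_graph ({..<n}, E)" and free: "induced_free F ({..<n}, E)" by auto
  define D where "D = edges (cycle_blowup n L) - E \<union> (E - edges (cycle_blowup n L))"
  define s where "s = n div L"
  show "1 / (4 * real L ^ 2) * real (card (verts (cycle_blowup n L))) ^ 2 \<le> real (card D)"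
    unfolding D_def[symmetric]
  proof (rule ccontr)
    assume "\<not> ?thesis"
    then have "real (card D) < real n ^ 2 / (4 * real L ^ 2)" by simp
    also have "\<dots> \<le> real s ^ 2"
      unfolding s_def using L by (intro square_div_four_square_le) auto
    finally have "real (card D) < real s ^ 2" .
    then have card_D: "card D < s ^ 2" by (metis of_nat_less_iff of_nat_power)
    have "finite D" unfolding D_def
      using wf_graph_edges_finite[OF wf] wf_graph_edges_finite[OF wf_graph_cycle_blowup] by simp
    then obtain a where a: "a \<in> PiE {..<L} (\<lambda>_. {..<s})"
      and avoid: "\<And>i j. i < L \<Longrightarrow> j < L \<Longrightarrow> i \<noteq> j \<Longrightarrow> {i + L * a i, j + L * a j} \<notin> D"
      using exists_transversal_avoiding card_D L(1) by metis
    have "contains_induced ({..<n}, E) (cycle L)"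
    proof (rule transversal_induces_cycle[OF L(1) wf _ a])
      show "L * s \<le> n" by (simp add: s_def)
      show "{i + L * a i, j + L * a j} \<in> E \<longleftrightarrow> {i + L * a i, j + L * a j} \<in> edges (cycle_blowup n L)"
        if "i < L" "j < L" "i \<noteq> j" for i j
        using avoid[OF that] unfolding D_def by blast
    qed
    moreover have "card (verts (cycle L)) \<le> m" using L by (simp add: cycle_def)
    ultimately obtain S where S: "S \<subseteq> {..<n}" "card S = m"
      and cyc: "contains_induced (induced_sub ({..<n}, E) S) (cycle L)"
      using contains_induced_in_induced_sub_of_card[of "({..<n}, E)" "cycle L" m] L by auto
    have "induced_sub ({..<n}, E) S \<in> F"
      using F wf_graph_induced_sub[OF wf] S cyc by simp
    moreover have "contains_induced ({..<n}, E) (induced_sub ({..<n}, E) S)"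
      using contains_induced_induced_sub S(1) by simp
    ultimately show False using free unfolding induced_free_def by blast
  qed
qed

definition cycle_family :: "(nat \<Rightarrow> nat) \<Rightarrow> graph set" where
  "cycle_family m = insert C4
     {H. wf_graph H \<and> (\<exists>j. card (verts H) = m j \<and> contains_induced H (cycle (j + 5)))}"

lemma wf_graph_cycle_family: "H \<in> cycle_family m \<Longrightarrow> wf_graph H"
  using wf_graph_cycle[of 4] by (auto simp: cycle_family_def C4_eq_cycle)

lemma cycle_blowup_far_from_cycle_family:
  "k + 5 \<le> m k \<Longrightarrow> m k \<le> n \<Longrightarrow>
     far_from_free (1 / (4 * real (k + 5) ^ 2)) (cycle_family m) (cycle_blowup n (k + 5))"
  by (rule cycle_blowup_far_from_free) (auto simp: cycle_family_def)

lemma cycle_blowup_small_induced_free: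
  assumes S: "S \<subseteq> {..<n}" "card S < m k"
  shows "induced_free (cycle_family m) (induced_sub (cycle_blowup n (k + 5)) S)"
  unfolding induced_free_def
proof (intro ballI notI)
  fix H assume H: "H \<in> cycle_family m"
    and sub: "contains_induced (induced_sub (cycle_blowup n (k + 5)) S) H"
  have G: "contains_induced (cycle_blowup n (k + 5)) H"
    using contains_induced_trans[OF contains_induced_induced_sub sub] S by simp
  show False
  proof (cases "H = C4")
    case True
    then show False
      using cycle_blowup_induced_cycle_length[of n "k + 5" 4] G by (simp add: C4_eq_cycle)
  next
    case False
    then obtain j where j: "card (verts H) = m j" "contains_induced H (cycle (j + 5))"
      using H by (auto simp: cycle_family_def)
    then have "j = k"
      using cycle_blowup_induced_cycle_length[OF contains_induced_trans[OF G j(2)]] by simp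
    moreover have "card (verts H) \<le> card S"
      using contains_induced_card_le[OF sub] finite_subset[OF S(1)] by simp
    ultimately show False using j S by simp
  qed
qed

lemma LIMSEQ_one_over_four_square: "(\<lambda>k. 1 / (4 * real (k + 5) ^ 2)) \<longlonglongrightarrow> (0::real)"
proof -
  have "filterlim (\<lambda>k. real k + 5) at_top sequentially"
    by (subst add.commute) (rule filterlim_tendsto_add_at_top[OF tendsto_const filterlim_real_sequentially])
  then have "(\<lambda>k. inverse (real k + 5) ^ 2 / 4) \<longlonglongrightarrow> (0::real)"
    by (auto intro!: tendsto_eq_intros tendsto_inverse_0_at_top)
  then show ?thesis by (simp add: field_simps power_inverse)
qed

theorem theorem5p1:
  fixes g :: "real \<Rightarrow> nat"
  shows "\<exists>\<F> :: graph set. \<exists>\<epsilon> :: nat \<Rightarrow> real.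
    (\<forall>H\<in>\<F>. wf_graph H) \<and> C4 \<in> \<F> \<and>
    (\<forall>k\<ge>1. 0 < \<epsilon> k \<and> \<epsilon> k < 1/2) \<and> \<epsilon> \<longlonglongrightarrow> 0 \<and>
    (\<forall>k\<ge>1. \<exists>n0. \<forall>n\<ge>n0. \<exists>G. wf_graph G \<and> card (verts G) = n \<and>
        far_from_free (\<epsilon> k) \<F> G \<and>
        (\<forall>S\<subseteq>verts G. card S = g (\<epsilon> k) \<longrightarrow> induced_free \<F> (induced_sub G S)))"
proof -
  define eps :: "nat \<Rightarrow> real" where "eps k = 1 / (4 * real (k + 5) ^ 2)" for k
  define m where "m k = max (Suc (g (eps k))) (k + 5)" for k
  have bounds: "0 < eps k \<and> eps k < 1/2" for k
    using power_mono[of 5 "real k + 5" 2] by (simp add: eps_def)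
  have witness: "\<exists>G. wf_graph G \<and> card (verts G) = n \<and> far_from_free (eps k) (cycle_family m) G \<and>
      (\<forall>S\<subseteq>verts G. card S = g (eps k) \<longrightarrow> induced_free (cycle_family m) (induced_sub G S))"
    if "m k \<le> n" for k n
    using that wf_graph_cycle_blowup[of n "k + 5"] cycle_blowup_far_from_cycle_family[of k m n]
      cycle_blowup_small_induced_free[of _ n m k]
    by (intro exI[of _ "cycle_blowup n (k + 5)"]) (auto simp: eps_def m_def)
  show ?thesis
  proof (intro exI[of _ "cycle_family m"] exI[of _ eps] conjI)
    show "\<forall>H\<in>cycle_family m. wf_graph H" using wf_graph_cycle_family by blast
    show "C4 \<in> cycle_family m" by (simp add: cycle_family_def)
    show "\<forall>k\<ge>1. 0 < eps k \<and> eps k < 1/2" using bounds by blast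
    show "eps \<longlonglongrightarrow> 0"
      unfolding eps_def by (rule LIMSEQ_one_over_four_square)
    show "\<forall>k\<ge>1. \<exists>n0. \<forall>n\<ge>n0. \<exists>G. wf_graph G \<and> card (verts G) = n \<and>
        far_from_free (eps k) (cycle_family m) G \<and>
        (\<forall>S\<subseteq>verts G. card S = g (eps k) \<longrightarrow> induced_free (cycle_family m) (induced_sub G S))"
      using witness by blast
  qed
qed

end
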